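(* Let $F$ be the unique series in $\mathbb{Q}[x,\bar x,y,\bar y][[t]]$ satisfying $(1-St)F=\bar x\bar y-\bar x t[x^0]F-\bar y t[y^0]F$, let $F_4=[x^\ge][y^\ge]F$, and put $O=xy-\bar xy-x\bar y+\bar x\bar y$. Then $$F_4(x,y,t)=\bar x\bar y t^2\,[y^>]\Bigl(\Bigl([\bar x]\frac{(y-\bar y)\,[\bar y]\frac{O}{1-St}}{1-St}\Bigr)\Bigl([x^>]\frac{x-\bar x}{1-St}\Bigr)\Bigr)+\bar x\bar y t^2\,[x^>]\Bigl(\Bigl([\bar y]\frac{(x-\bar x)\,[\bar x]\frac{O}{1-St}}{1-St}\Bigr)\Bigl([y^>]\frac{y-\bar y}{1-St}\Bigr)\Bigr).$$
   Context: Notation: $\bar x=x^{-1}$, $\bar y=y^{-1}$, $S=x+y+\bar x+\bar y$; series in $\mathbb{Q}[x,\bar x,y,\bar y][[t]]$, with $1/(1-St)$ expanded as a power series in $t$. For $G=\sum c_{i,j,n}x^iy^jt^n$: $[x^0]G=\sum_{j,n}c_{0,j,n}y^jt^n$; $[x^\ge]G$, $[x^>]G$ denote the sums of terms with $x$-exponent $\ge0$, $>0$ respectively, analogously for $y$; $[\bar x]G=\sum_{j,n}c_{-1,j,n}y^jt^n$ is the coefficient of $x^{-1}$ and $[\bar y]G=\sum_{i,n}c_{i,-1,n}x^it^n$ the coefficient of $y^{-1}$. *)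

theory Defs
  imports Main "HOL.Rat"
begin

text \<open>A series in Q[x,xbar,y,ybar][[t]] is represented by its coefficient function:
  F i j n is the coefficient of x^i y^j t^n.  Membership in Q[x,xbar,y,ybar][[t]]
  means every t-coefficient is a Laurent polynomial (finite support).\<close>

type_synonym ser = "int \<Rightarrow> int \<Rightarrow> nat \<Rightarrow> rat"

definition supp :: "ser \<Rightarrow> nat \<Rightarrow> (int \<times> int) set" where
  "supp A n = {p. A (fst p) (snd p) n \<noteq> 0}"

definition valid :: "ser \<Rightarrow> bool" where
  "valid A \<longleftrightarrow> (\<forall>n. finite (supp A n))"

definition sadd :: "ser \<Rightarrow> ser \<Rightarrow> ser" where
  "sadd A B = (\<lambda>i j n. A i j n + B i j n)"

definition ssub :: "ser \<Rightarrow> ser \<Rightarrow> ser" where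
  "ssub A B = (\<lambda>i j n. A i j n - B i j n)"

text \<open>Cauchy product (well defined for valid series).\<close>
definition smul :: "ser \<Rightarrow> ser \<Rightarrow> ser" where
  "smul A B = (\<lambda>i j n. \<Sum>m\<le>n. \<Sum>p\<in>supp A m.
      A (fst p) (snd p) m * B (i - fst p) (j - snd p) (n - m))"

definition lmon :: "rat \<Rightarrow> int \<Rightarrow> int \<Rightarrow> nat \<Rightarrow> ser" where
  "lmon c a b k = (\<lambda>i j n. if i = a \<and> j = b \<and> n = k then c else 0)"

definition Sser :: ser where
  "Sser = sadd (sadd (lmon 1 1 0 0) (lmon 1 (-1) 0 0)) (sadd (lmon 1 0 1 0) (lmon 1 0 (-1) 0))"

definition oneMinusSt :: ser where
  "oneMinusSt = ssub (lmon 1 0 0 0) (smul Sser (lmon 1 0 0 1))"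

text \<open>1/(1-St) = sum_n S^n t^n, coefficientwise: the t^(n+1)-coefficient is S times the t^n-coefficient.\<close>
fun invSt :: ser where
  "invSt i j 0 = (if i = 0 \<and> j = 0 then 1 else 0)"
| "invSt i j (Suc n) = invSt (i - 1) j n + invSt (i + 1) j n + invSt i (j - 1) n + invSt i (j + 1) n"

definition cx0 :: "ser \<Rightarrow> ser" where
  "cx0 F = (\<lambda>i j n. if i = 0 then F 0 j n else 0)"
definition cy0 :: "ser \<Rightarrow> ser" where
  "cy0 F = (\<lambda>i j n. if j = 0 then F i 0 n else 0)"
definition cxbar :: "ser \<Rightarrow> ser" where
  "cxbar F = (\<lambda>i j n. if i = 0 then F (-1) j n else 0)"
definition cybar :: "ser \<Rightarrow> ser" where
  "cybar F = (\<lambda>i j n. if j = 0 then F i (-1) n else 0)"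
definition xge :: "ser \<Rightarrow> ser" where
  "xge F = (\<lambda>i j n. if i \<ge> 0 then F i j n else 0)"
definition xgt :: "ser \<Rightarrow> ser" where
  "xgt F = (\<lambda>i j n. if i > 0 then F i j n else 0)"
definition yge :: "ser \<Rightarrow> ser" where
  "yge F = (\<lambda>i j n. if j \<ge> 0 then F i j n else 0)"
definition ygt :: "ser \<Rightarrow> ser" where
  "ygt F = (\<lambda>i j n. if j > 0 then F i j n else 0)"

definition Oser :: ser where
  "Oser = sadd (ssub (ssub (lmon 1 1 1 0) (lmon 1 (-1) 1 0)) (lmon 1 1 (-1) 0)) (lmon 1 (-1) (-1) 0)"

end

theory Submission
  imports Defs
begin

text \<open>By its defining equation, F counts walks on \<open>\<int>\<^sup>2\<close> with unit steps that start at
  \<open>(-1,-1)\<close> and never step from the line \<open>x = 0\<close> to \<open>x = -1\<close> nor from \<open>y = 0\<close> to \<open>y = -1\<close>.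
  Such a walk lives first in the south-west quadrant, possibly moves on to the north-west
  (or south-east) quadrant and ends in the north-east quadrant, never returning.  On each
  quadrant the coefficients of F obey the free recurrence of \<open>1/(1-St)\<close> with absorbing walls
  and a source fed by the previous quadrant, so the reflection principle solves them: extend
  the source antisymmetrically across the walls and divide by \<open>1 - St\<close>.  This yields
  \<open>O/(1-St)\<close> on the south-west quadrant, a shifted copy of
  \<open>(y - ybar) [ybar](O/(1-St)) / (1-St)\<close> on the north-west quadrant, and on the north-east quadrant the
  first summand of the formula for the walks entering across \<open>x = 0\<close>; by the symmetry
  \<open>x \<leftrightarrow> y\<close> of F the walks entering across \<open>y = 0\<close> give the second summand.\<close>

section \<open>Products of series\<close>

lemma sum_supp_superset:
  assumes "finite Z" "supp A m \<subseteq> Z"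
  shows "(\<Sum>p\<in>supp A m. A (fst p) (snd p) m * f p) = (\<Sum>p\<in>Z. A (fst p) (snd p) m * f p)"
  by (rule sum.mono_neutral_left) (use assms in \<open>auto simp: supp_def\<close>)

lemma smul_superset:
  assumes "\<And>m. finite (Z m)" "\<And>m. supp A m \<subseteq> Z m"
  shows "smul A B i j n = (\<Sum>m\<le>n. \<Sum>p\<in>Z m. A (fst p) (snd p) m * B (i - fst p) (j - snd p) (n - m))"
  unfolding smul_def using assms by (intro sum.cong refl sum_supp_superset)

lemma smul_sadd_left:
  assumes "valid A" "valid B"
  shows "smul (sadd A B) C = sadd (smul A C) (smul B C)"
proof (intro ext)
  fix i j n
  define Z where "Z m = supp A m \<union> supp B m" for m
  have "finite (Z m)" for m using assms by (simp add: Z_def valid_def)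
  moreover have "supp A m \<subseteq> Z m" "supp B m \<subseteq> Z m" "supp (sadd A B) m \<subseteq> Z m" for m
    by (auto simp: Z_def supp_def sadd_def)
  ultimately show "smul (sadd A B) C i j n = sadd (smul A C) (smul B C) i j n"
    by (simp add: smul_superset[of Z] sadd_def distrib_right sum.distrib)
qed

lemma smul_ssub_left:
  assumes "valid A" "valid B"
  shows "smul (ssub A B) C = ssub (smul A C) (smul B C)"
proof (intro ext)
  fix i j n
  define Z where "Z m = supp A m \<union> supp B m" for m
  have "finite (Z m)" for m using assms by (simp add: Z_def valid_def)
  moreover have "supp A m \<subseteq> Z m" "supp B m \<subseteq> Z m" "supp (ssub A B) m \<subseteq> Z m" for m
    by (auto simp: Z_def supp_def ssub_def)
  ultimately show "smul (ssub A B) C i j n = ssub (smul A C) (smul B C) i j n"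
    by (simp add: smul_superset[of Z] ssub_def left_diff_distrib sum_subtractf)
qed

lemma valid_sadd: "valid A \<Longrightarrow> valid B \<Longrightarrow> valid (sadd A B)"
proof -
  assume a: "valid A" "valid B"
  have "supp (sadd A B) n \<subseteq> supp A n \<union> supp B n" for n by (auto simp: supp_def sadd_def)
  then show ?thesis using a unfolding valid_def by (meson finite_Un finite_subset)
qed

lemma valid_ssub: "valid A \<Longrightarrow> valid B \<Longrightarrow> valid (ssub A B)"
proof -
  assume a: "valid A" "valid B"
  have "supp (ssub A B) n \<subseteq> supp A n \<union> supp B n" for n by (auto simp: supp_def ssub_def)
  then show ?thesis using a unfolding valid_def by (meson finite_Un finite_subset)
qed

lemma valid_lmon: "valid (lmon c a b k)"
proof -
  have "supp (lmon c a b k) n \<subseteq> {(a, b)}" for n by (auto simp: supp_def lmon_def)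
  then show ?thesis unfolding valid_def by (meson finite.emptyI finite_insert finite_subset)
qed

lemma valid_smul:
  assumes "valid A" "valid B" shows "valid (smul A B)"
  unfolding valid_def
proof
  fix n
  let ?U = "\<Union>m\<le>n. \<Union>p\<in>supp A m. \<Union>q\<in>supp B (n - m). {(fst p + fst q, snd p + snd q)}"
  have "supp (smul A B) n \<subseteq> ?U"
  proof
    fix z assume "z \<in> supp (smul A B) n"
    then obtain i j where z: "z = (i, j)" and "smul A B i j n \<noteq> 0" by (cases z) (auto simp: supp_def)
    then obtain m p where "m \<le> n" "p \<in> supp A m"
      and "A (fst p) (snd p) m * B (i - fst p) (j - snd p) (n - m) \<noteq> 0"
      unfolding smul_def by (meson atMost_iff sum.not_neutral_contains_not_neutral)
    then show "z \<in> ?U" unfolding z by (force simp: supp_def)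
  qed
  moreover have "finite ?U" using assms unfolding valid_def by auto
  ultimately show "finite (supp (smul A B) n)" by (rule finite_subset)
qed

lemma valid_cxbar: "valid A \<Longrightarrow> valid (cxbar A)"
proof -
  assume a: "valid A"
  have "supp (cxbar A) n \<subseteq> (\<lambda>p. (0, snd p)) ` supp A n" for n
    by (auto simp: supp_def cxbar_def image_iff)
  then show ?thesis using a unfolding valid_def by (meson finite_imageI finite_subset)
qed

lemma valid_cybar: "valid A \<Longrightarrow> valid (cybar A)"
proof -
  assume a: "valid A"
  have "supp (cybar A) n \<subseteq> (\<lambda>p. (fst p, 0)) ` supp A n" for n
    by (auto simp: supp_def cybar_def image_iff)
  then show ?thesis using a unfolding valid_def by (meson finite_imageI finite_subset)
qed

lemma smul_lmon:
  "smul (lmon c a b k) A i j n = (if k \<le> n then c * A (i - a) (j - b) (n - k) else 0)"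
proof -
  have "supp (lmon c a b k) m = (if m = k \<and> c \<noteq> 0 then {(a, b)} else {})" for m
    by (auto simp: supp_def lmon_def)
  then have "(\<Sum>p\<in>supp (lmon c a b k) m. lmon c a b k (fst p) (snd p) m * A (i - fst p) (j - snd p) (n - m))
      = (if k = m then c * A (i - a) (j - b) (n - m) else 0)" for m
    by (auto simp: lmon_def)
  then show ?thesis by (simp add: smul_def)
qed

lemma smul_Sser: "smul Sser X i j n = X (i - 1) j n + X (i + 1) j n + X i (j - 1) n + X i (j + 1) n"
  unfolding Sser_def
  by (simp only: smul_sadd_left valid_sadd valid_lmon) (simp add: sadd_def smul_lmon)

lemma smul_oneMinusSt: "smul oneMinusSt X i j n = X i j n -
   (if 1 \<le> n then X (i - 1) j (n - 1) + X (i + 1) j (n - 1) + X i (j - 1) (n - 1) + X i (j + 1) (n - 1) else 0)"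
proof -
  have expand: "oneMinusSt = ssub (lmon 1 0 0 0)
      (sadd (sadd (lmon 1 1 0 1) (lmon 1 (-1) 0 1)) (sadd (lmon 1 0 1 1) (lmon 1 0 (-1) 1)))"
    unfolding oneMinusSt_def by (auto simp: fun_eq_iff ssub_def smul_Sser sadd_def lmon_def)
  show ?thesis unfolding expand
    by (simp only: smul_sadd_left smul_ssub_left valid_sadd valid_lmon) (simp add: sadd_def ssub_def smul_lmon)
qed

lemma smul_x_minus_xbar:
  "smul (ssub (lmon 1 1 0 0) (lmon 1 (-1) 0 0)) X = (\<lambda>i j n. X (i - 1) j n - X (i + 1) j n)"
  by (simp only: smul_ssub_left valid_lmon) (simp add: fun_eq_iff ssub_def smul_lmon)

lemma smul_y_minus_ybar:
  "smul (ssub (lmon 1 0 1 0) (lmon 1 0 (-1) 0)) X = (\<lambda>i j n. X i (j - 1) n - X i (j + 1) n)"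
  by (simp only: smul_ssub_left valid_lmon) (simp add: fun_eq_iff ssub_def smul_lmon)

lemma smul_x_difference_right:
  "smul A (\<lambda>i j n. X (i - 1) j n - X (i + 1) j n) i j n = smul A X (i - 1) j n - smul A X (i + 1) j n"
  by (simp add: smul_def right_diff_distrib sum_subtractf algebra_simps)

lemma smul_xgt_column:
  assumes "\<And>i j n. i \<noteq> 0 \<Longrightarrow> G i j n = 0"
  shows "smul G (xgt H) i j n = (if 0 < i then smul G H i j n else 0)"
proof -
  have "fst p = 0" if "p \<in> supp G m" for p m using that assms by (cases p) (auto simp: supp_def)
  then show ?thesis by (auto simp: smul_def xgt_def intro!: sum.cong sum.neutral)
qed

definition swap_xy :: "ser \<Rightarrow> ser" where "swap_xy A = (\<lambda>i j n. A j i n)"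

lemma supp_swap_xy: "supp (swap_xy A) m = prod.swap ` supp A m"
  by (auto simp: supp_def swap_xy_def image_iff)

lemma valid_swap_xy: "valid A \<Longrightarrow> valid (swap_xy A)"
  by (simp add: valid_def supp_swap_xy)

lemma swap_xy_smul: "swap_xy (smul A B) = smul (swap_xy A) (swap_xy B)"
proof (intro ext)
  fix i j n
  have "smul (swap_xy A) (swap_xy B) i j n = (\<Sum>m\<le>n. \<Sum>p\<in>supp A m.
     A (fst p) (snd p) m * B (j - fst p) (i - snd p) (n - m))"
    unfolding smul_def supp_swap_xy by (subst sum.reindex) (auto simp: swap_xy_def)
  then show "swap_xy (smul A B) i j n = smul (swap_xy A) (swap_xy B) i j n"
    by (simp add: swap_xy_def smul_def)
qed

lemma swap_xy_lmon: "swap_xy (lmon c a b k) = lmon c b a k"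
  by (auto simp: fun_eq_iff swap_xy_def lmon_def)
lemma swap_xy_ssub: "swap_xy (ssub A B) = ssub (swap_xy A) (swap_xy B)"
  by (simp add: fun_eq_iff swap_xy_def ssub_def)
lemma swap_xy_cxbar: "swap_xy (cxbar A) = cybar (swap_xy A)"
  by (simp add: fun_eq_iff swap_xy_def cxbar_def cybar_def)
lemma swap_xy_cybar: "swap_xy (cybar A) = cxbar (swap_xy A)"
  by (simp add: fun_eq_iff swap_xy_def cxbar_def cybar_def)
lemma swap_xy_xgt: "swap_xy (xgt A) = ygt (swap_xy A)"
  by (simp add: fun_eq_iff swap_xy_def xgt_def ygt_def)
lemma swap_xy_ygt: "swap_xy (ygt A) = xgt (swap_xy A)"
  by (simp add: fun_eq_iff swap_xy_def xgt_def ygt_def)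
lemma swap_xy_invSt: "swap_xy invSt = invSt"
proof -
  have "invSt j i n = invSt i j n" for i j n by (induction n arbitrary: i j) auto
  then show ?thesis by (simp add: fun_eq_iff swap_xy_def)
qed
lemma swap_xy_Oser: "swap_xy Oser = Oser"
  by (auto simp: fun_eq_iff swap_xy_def Oser_def sadd_def ssub_def lmon_def)

section \<open>Division by 1 - St\<close>

lemma invSt_bound: "invSt i j n \<noteq> 0 \<Longrightarrow> \<bar>i\<bar> + \<bar>j\<bar> \<le> int n"
proof (induction n arbitrary: i j)
  case (Suc n)
  then have "invSt (i - 1) j n \<noteq> 0 \<or> invSt (i + 1) j n \<noteq> 0 \<or> invSt i (j - 1) n \<noteq> 0 \<or> invSt i (j + 1) n \<noteq> 0"
    by auto
  then show ?case using Suc.IH by (elim disjE; fastforce)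
qed (auto split: if_splits)

lemma valid_invSt: "valid invSt"
  unfolding valid_def
proof
  fix n
  have "supp invSt n \<subseteq> {-int n..int n} \<times> {-int n..int n}"
    by (auto simp: supp_def dest!: invSt_bound)
  then show "finite (supp invSt n)" by (rule finite_subset) auto
qed

lemma sum_supp_invSt_0:
  assumes "valid g"
  shows "(\<Sum>p\<in>supp g m. g (fst p) (snd p) m * invSt (i - fst p) (j - snd p) 0) = g i j m"
proof -
  have "(\<Sum>p\<in>supp g m. g (fst p) (snd p) m * invSt (i - fst p) (j - snd p) 0)
      = (\<Sum>p\<in>supp g m. if p = (i, j) then g i j m else 0)"
    by (intro sum.cong) auto
  also have "\<dots> = g i j m" using assms by (auto simp: valid_def supp_def)
  finally show ?thesis .
qed

lemma smul_invSt_0: "valid g \<Longrightarrow> smul g invSt i j 0 = g i j 0"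
  by (simp add: smul_def sum_supp_invSt_0 del: invSt.simps)

lemma smul_invSt_Suc:
  assumes "valid g"
  shows "smul g invSt i j (Suc n) = g i j (Suc n) + smul g invSt (i - 1) j n + smul g invSt (i + 1) j n
     + smul g invSt i (j - 1) n + smul g invSt i (j + 1) n"
proof -
  have "smul g invSt i j (Suc n) = (\<Sum>m\<le>n. \<Sum>p\<in>supp g m.
      g (fst p) (snd p) m * invSt (i - fst p) (j - snd p) (Suc (n - m))) + g i j (Suc n)"
    by (simp add: smul_def Suc_diff_le sum_supp_invSt_0[OF assms] del: invSt.simps cong: sum.cong_simp)
  then show ?thesis
    by (simp add: smul_def distrib_left sum.distrib algebra_simps)
qed

text \<open>Reflection principle: S is invariant under \<open>x \<mapsto> xbar\<close>, so dividing by \<open>1 - St\<close>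
  preserves any symmetry of the coefficients under \<open>i \<mapsto> -i\<close>.\<close>

lemma smul_invSt_reflect_x:
  assumes "valid g" and "\<And>i j n. g (-i) j n = c * g i j n"
  shows "smul g invSt (-i) j n = c * smul g invSt i j n"
proof (induction n arbitrary: i j)
  case 0 then show ?case using assms by (simp add: smul_invSt_0)
next
  case (Suc n)
  have "smul g invSt (-i - 1) j n = c * smul g invSt (i + 1) j n" using Suc.IH[of "i + 1" j] by simp
  moreover have "smul g invSt (1 - i) j n = c * smul g invSt (i - 1) j n" using Suc.IH[of "i - 1" j] by simp
  ultimately show ?case using assms by (simp add: smul_invSt_Suc Suc.IH distrib_left)
qed

lemma smul_invSt_reflect_y:
  assumes "valid g" and "\<And>i j n. g i (-j) n = c * g i j n"
  shows "smul g invSt i (-j) n = c * smul g invSt i j n"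
proof -
  have "smul (swap_xy g) invSt = swap_xy (smul g invSt)" by (simp add: swap_xy_smul swap_xy_invSt)
  then have swapped: "smul (swap_xy g) invSt j i n = smul g invSt i j n" for i j n
    by (simp add: swap_xy_def)
  have "smul (swap_xy g) invSt (-j) i n = c * smul (swap_xy g) invSt j i n"
    using assms by (intro smul_invSt_reflect_x valid_swap_xy) (simp_all add: swap_xy_def)
  then show ?thesis by (simp add: swapped)
qed

section \<open>The quadrant series\<close>

lemma valid_Oser: "valid Oser"
  unfolding Oser_def by (intro valid_sadd valid_ssub valid_lmon)

lemma Oser_neg_x: "Oser (-i) j n = - Oser i j n"
  by (auto simp: Oser_def sadd_def ssub_def lmon_def)

lemma Oser_neg_y: "Oser i (-j) n = - Oser i j n"
  by (auto simp: Oser_def sadd_def ssub_def lmon_def)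

definition SW_series :: ser where
  "SW_series = smul Oser invSt"

definition NW_source :: ser where
  "NW_source = smul (ssub (lmon 1 0 1 0) (lmon 1 0 (-1) 0)) (cybar SW_series)"

definition NW_series :: ser where
  "NW_series = smul NW_source invSt"

definition NE_source :: ser where
  "NE_source = cxbar NW_series"

definition NE_series :: ser where
  "NE_series = smul NE_source invSt"

definition NE_from_west :: ser where
  "NE_from_west = smul (lmon 1 (-1) (-1) 2)
     (ygt (smul NE_source (xgt (smul (ssub (lmon 1 1 0 0) (lmon 1 (-1) 0 0)) invSt))))"

lemma SW_series_0: "i < 0 \<Longrightarrow> j < 0 \<Longrightarrow> SW_series i j 0 = (if i = -1 \<and> j = -1 then 1 else 0)"
  by (simp add: SW_series_def smul_invSt_0 valid_Oser) (auto simp: Oser_def sadd_def ssub_def lmon_def)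

lemma SW_series_Suc:
  "SW_series i j (Suc n) = SW_series (i - 1) j n + SW_series (i + 1) j n
     + SW_series i (j - 1) n + SW_series i (j + 1) n"
  by (simp add: SW_series_def smul_invSt_Suc valid_Oser) (simp add: Oser_def sadd_def ssub_def lmon_def)

lemma SW_series_neg_x: "SW_series (-i) j n = - SW_series i j n"
  using smul_invSt_reflect_x[OF valid_Oser, of "-1"] by (simp add: SW_series_def Oser_neg_x)

lemma SW_series_neg_y: "SW_series i (-j) n = - SW_series i j n"
  using smul_invSt_reflect_y[OF valid_Oser, of "-1"] by (simp add: SW_series_def Oser_neg_y)

lemma NW_source_eq: "NW_source i j n =
    (if j = 1 then SW_series i (-1) n else 0) - (if j = -1 then SW_series i (-1) n else 0)"
  by (simp add: NW_source_def smul_y_minus_ybar cybar_def)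

lemma valid_NW_source: "valid NW_source"
  unfolding NW_source_def SW_series_def
  by (intro valid_smul valid_ssub valid_lmon valid_cybar valid_Oser valid_invSt)

lemmas NW_series_0 = smul_invSt_0[OF valid_NW_source, folded NW_series_def]
lemmas NW_series_Suc = smul_invSt_Suc[OF valid_NW_source, folded NW_series_def]

lemma NW_series_neg_x: "NW_series (-i) j n = - NW_series i j n"
  using smul_invSt_reflect_x[OF valid_NW_source, of "-1"]
  by (simp add: NW_series_def NW_source_eq SW_series_neg_x)

lemma NW_series_neg_y: "NW_series i (-j) n = - NW_series i j n"
  using smul_invSt_reflect_y[OF valid_NW_source, of "-1"] by (auto simp: NW_series_def NW_source_eq)

lemma NE_source_eq: "NE_source i j n = (if i = 0 then NW_series (-1) j n else 0)"
  by (simp add: NE_source_def cxbar_def)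

lemma valid_NE_source: "valid NE_source"
  unfolding NE_source_def NW_series_def by (intro valid_cxbar valid_smul valid_NW_source valid_invSt)

lemmas NE_series_0 = smul_invSt_0[OF valid_NE_source, folded NE_series_def]
lemmas NE_series_Suc = smul_invSt_Suc[OF valid_NE_source, folded NE_series_def]

lemma NE_series_neg_x: "NE_series (-i) j n = NE_series i j n"
  using smul_invSt_reflect_x[OF valid_NE_source, of 1] by (simp add: NE_series_def NE_source_eq)

lemma NE_series_neg_y: "NE_series i (-j) n = - NE_series i j n"
  using smul_invSt_reflect_y[OF valid_NE_source, of "-1"]
  by (simp add: NE_series_def NE_source_eq NW_series_neg_y)

text \<open>As \<open>NE_series\<close> is even in x, this is the reflection across the wall \<open>x = -1\<close>.\<close>

lemma NE_from_west_eq: "NE_from_west i j n =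
  (if 2 \<le> n \<and> 0 \<le> i \<and> 0 \<le> j
   then NE_series i (j + 1) (n - 2) - NE_series (i + 2) (j + 1) (n - 2) else 0)"
proof -
  have "smul NE_source (xgt (smul (ssub (lmon 1 1 0 0) (lmon 1 (-1) 0 0)) invSt)) a b k =
      (if 0 < a then NE_series (a - 1) b k - NE_series (a + 1) b k else 0)" for a b k
    by (simp add: smul_xgt_column NE_source_eq smul_x_minus_xbar smul_x_difference_right NE_series_def)
  then show ?thesis by (auto simp: NE_from_west_def smul_lmon ygt_def algebra_simps)
qed

lemma NE_from_west_Suc_Suc:
  assumes "0 \<le> i" "0 \<le> j"
  shows "NE_from_west i j (Suc (Suc n)) = (if i = 0 then NW_series (-1) (j + 1) n else 0)
     + (if 1 \<le> i then NE_from_west (i - 1) j (Suc n) else 0) + NE_from_west (i + 1) j (Suc n)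
     + (if 1 \<le> j then NE_from_west i (j - 1) (Suc n) else 0) + NE_from_west i (j + 1) (Suc n)"
proof (cases n)
  case 0
  then show ?thesis using assms by (simp add: NE_from_west_eq NE_series_0 NE_source_eq)
next
  case (Suc m)
  let ?E = "\<lambda>a b. NE_series a b m - NE_series (a + 2) b m"
  have "NE_from_west i j (Suc (Suc n)) = NE_series i (j + 1) (Suc m) - NE_series (i + 2) (j + 1) (Suc m)"
    using assms Suc by (simp add: NE_from_west_eq)
  also have "\<dots> = NE_source i (j + 1) (Suc m) - NE_source (i + 2) (j + 1) (Suc m)
      + ?E (i - 1) (j + 1) + ?E (i + 1) (j + 1) + ?E i j + ?E i (j + 2)"
    by (simp add: NE_series_Suc algebra_simps)
  also have "\<dots> = (if i = 0 then NW_series (-1) (j + 1) n else 0)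
     + (if 1 \<le> i then NE_from_west (i - 1) j (Suc n) else 0) + NE_from_west (i + 1) j (Suc n)
     + (if 1 \<le> j then NE_from_west i (j - 1) (Suc n) else 0) + NE_from_west i (j + 1) (Suc n)"
  proof -
    have "?E (-1) b = 0" for b using NE_series_neg_x[of 1 b m] by simp
    moreover have "NE_series a 0 m = 0" for a using NE_series_neg_y[of a 0 m] by simp
    ultimately show ?thesis using assms Suc
      by (cases "i = 0"; cases "j = 0") (simp_all add: NE_from_west_eq NE_source_eq algebra_simps)
  qed
  finally show ?thesis .
qed

section \<open>The coefficients of F\<close>

context
  fixes F :: ser
  assumes F_eq: "smul oneMinusSt F =
          ssub (ssub (lmon 1 (-1) (-1) 0) (smul (lmon 1 (-1) 0 1) (cx0 F)))
               (smul (lmon 1 0 (-1) 1) (cy0 F))"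
begin

lemma F_coeff: "smul oneMinusSt F i j n =
    ssub (ssub (lmon 1 (-1) (-1) 0) (smul (lmon 1 (-1) 0 1) (cx0 F))) (smul (lmon 1 0 (-1) 1) (cy0 F)) i j n"
  using F_eq by simp

lemma F_0: "F i j 0 = (if i = -1 \<and> j = -1 then 1 else 0)"
  using F_coeff[of i j 0] by (simp only: smul_oneMinusSt ssub_def smul_lmon) (simp add: lmon_def)

lemma F_Suc: "F i j (Suc n) = F (i - 1) j n + F (i + 1) j n + F i (j - 1) n + F i (j + 1) n
   - (if i = -1 then F 0 j n else 0) - (if j = -1 then F i 0 n else 0)"
  using F_coeff[of i j "Suc n"]
  by (simp only: smul_oneMinusSt ssub_def smul_lmon) (auto simp: lmon_def cx0_def cy0_def)

lemma F_swap: "F j i n = F i j n"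
proof (induction n arbitrary: i j)
  case 0 then show ?case by (auto simp: F_0)
next
  case (Suc n)
  show ?case
    by (simp add: F_Suc[of j i n] F_Suc[of i j n] Suc.IH[of "j - 1" i] Suc.IH[of "j + 1" i]
        Suc.IH[of j "i - 1"] Suc.IH[of j "i + 1"] Suc.IH[of 0 i] Suc.IH[of j 0])
qed

lemma F_SW: "i < 0 \<Longrightarrow> j < 0 \<Longrightarrow> F i j n = SW_series i j n"
proof (induction n arbitrary: i j)
  case 0 then show ?case by (simp add: F_0 SW_series_0)
next
  case (Suc n)
  have "SW_series 0 b n = 0" "SW_series a 0 n = 0" for a b
    using SW_series_neg_x[of 0 b n] SW_series_neg_y[of a 0 n] by simp_all
  with Suc show ?case
    by (cases "i = -1"; cases "j = -1") (simp_all add: F_Suc SW_series_Suc)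
qed

lemma F_NW: "i < 0 \<Longrightarrow> 0 \<le> j \<Longrightarrow> F i j (Suc n) = NW_series i (j + 1) n"
proof (induction n arbitrary: i j)
  case 0 then show ?case
    by (simp add: F_Suc[of i j 0] F_0 NW_series_0 NW_source_eq SW_series_0)
next
  case (Suc n)
  have "NW_series 0 b n = 0" "NW_series a 0 n = 0" for a b
    using NW_series_neg_x[of 0 b n] NW_series_neg_y[of a 0 n] by simp_all
  with Suc show ?case
    unfolding F_Suc[of i j "Suc n"] NW_series_Suc[of i "j + 1" n]
    by (cases "i = -1"; cases "j = 0") (simp_all add: NW_source_eq F_SW)
qed

lemma F_NE: "0 \<le> i \<Longrightarrow> 0 \<le> j \<Longrightarrow> F i j n = NE_from_west i j n + NE_from_west j i n"
proof (induction n arbitrary: i j)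
  case 0 then show ?case by (simp add: F_0 NE_from_west_eq)
next
  case (Suc n)
  show ?case
  proof (cases n)
    case 0 then show ?thesis using Suc.prems by (simp add: F_Suc F_0 NE_from_west_eq)
  next
    case (Suc m)
    have "F (i - 1) j (Suc m) = (if i = 0 then NW_series (-1) (j + 1) m
        else NE_from_west (i - 1) j (Suc m) + NE_from_west j (i - 1) (Suc m))"
      using Suc.IH[of "i - 1" j] Suc.prems \<open>n = Suc m\<close> F_NW[of "-1" j m] by auto
    moreover have "F i (j - 1) (Suc m) = (if j = 0 then NW_series (-1) (i + 1) m
        else NE_from_west i (j - 1) (Suc m) + NE_from_west (j - 1) i (Suc m))"
      using Suc.IH[of i "j - 1"] Suc.prems \<open>n = Suc m\<close> F_NW[of "-1" i m] F_swap[of i "-1" "Suc m"]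
      by auto
    ultimately show ?thesis
      using Suc.prems \<open>n = Suc m\<close> Suc.IH[of "i + 1" j] Suc.IH[of i "j + 1"]
      by (simp add: F_Suc[of i j "Suc m"] NE_from_west_Suc_Suc)
  qed
qed

end

theorem mainTheorem4:
  fixes F :: ser
  assumes "valid F"
    and "smul oneMinusSt F =
          ssub (ssub (lmon 1 (-1) (-1) 0) (smul (lmon 1 (-1) 0 1) (cx0 F)))
               (smul (lmon 1 0 (-1) 1) (cy0 F))"
  shows "xge (yge F) =
    sadd
     (smul (lmon 1 (-1) (-1) 2)
       (ygt (smul
          (cxbar (smul (smul (ssub (lmon 1 0 1 0) (lmon 1 0 (-1) 0)) (cybar (smul Oser invSt))) invSt))
          (xgt (smul (ssub (lmon 1 1 0 0) (lmon 1 (-1) 0 0)) invSt)))))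
     (smul (lmon 1 (-1) (-1) 2)
       (xgt (smul
          (cybar (smul (smul (ssub (lmon 1 1 0 0) (lmon 1 (-1) 0 0)) (cxbar (smul Oser invSt))) invSt))
          (ygt (smul (ssub (lmon 1 0 1 0) (lmon 1 0 (-1) 0)) invSt)))))"
proof -
  have "xge (yge F) = sadd NE_from_west (swap_xy NE_from_west)"
    by (auto simp: fun_eq_iff xge_def yge_def sadd_def swap_xy_def NE_from_west_eq F_NE[OF assms(2)])
  then show ?thesis
    by (simp only: NE_from_west_def NE_source_def NW_series_def NW_source_def SW_series_def
        swap_xy_smul swap_xy_lmon swap_xy_ssub swap_xy_cxbar swap_xy_cybar swap_xy_xgt swap_xy_ygt
        swap_xy_invSt swap_xy_Oser)
qed

end
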